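(* Let $\alpha\in(0,1)$. Assume the setting described in the context, and assume: (i) (concentration over calibration data) there exist $\varepsilon_{\mathrm{cal}}\in(0,1)$ and $\delta_{\mathrm{cal}}\in(0,1)$ such that for every measurable $q:(\mathcal{X}\times\mathcal{Y})^{n_{\mathrm{train}}}\to\mathbb{R}$, \[\mathbb{P}\left[\left|\frac{1}{n_{\mathrm{cal}}}\sum_{i\in I_{\mathrm{cal}}}\mathbf{1}\{\widehat{s}_{\mathrm{train}}(X_i,Y_i)\le q_{\mathrm{train}}\}-P_{q,\mathrm{train}}\right|\le\varepsilon_{\mathrm{cal}}\right]\ge 1-\delta_{\mathrm{cal}};\] (ii) (marginal decoupling of test data) there exists $\varepsilon_{\mathrm{test}}$ such that for every measurable $q:(\mathcal{X}\times\mathcal{Y})^{n_{\mathrm{train}}}\to\mathbb{R}$ and every $i\in I_{\mathrm{test}}$, \[\left|\mathbb{P}[\widehat{s}_{\mathrm{train}}(X_i,Y_i)\le q_{\mathrm{train}}]-\mathbb{E}[P_{q,\mathrm{train}}]\right|\le\varepsilon_{\mathrm{test}}.\] Then for all $i\in I_{\mathrm{test}}$, \[\mathbb{P}[Y_i\in C_{1-\alpha}(X_i)]\ge 1-\alpha-\varepsilon_{\mathrm{cal}}-\delta_{\mathrm{cal}}-\varepsilon_{\mathrm{test}}.\] Additionally, if $\widehat{s}_{\mathrm{train}}(X_*,Y_* )$ almost surely has a continuous distribution conditionally on the training data $(X_i,Y_i)_{i\in I_{\mathrm{train}}}$, then for all $i\in I_{\mathrm{test}}$, \[\left|\mathbb{P}[Y_i\in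 C_{1-\alpha}(X_i)]-(1-\alpha)\right|\le\varepsilon_{\mathrm{cal}}+\delta_{\mathrm{cal}}+\varepsilon_{\mathrm{test}}.\]
   Context: Let $\mathcal{X},\mathcal{Y}$ be measurable spaces. The sample $(X_i,Y_i)_{i=1}^n$ consists of random pairs in $\mathcal{X}\times\mathcal{Y}$, and $(X_*,Y_* )$ is an additional random pair in $\mathcal{X}\times\mathcal{Y}$, independent of the sample, with $(X_i,Y_i)\sim(X_*,Y_* )$ for all $i\in\{1,\dots,n\}$. Write $n=n_{\mathrm{train}}+n_{\mathrm{cal}}+n_{\mathrm{test}}$ with positive integers, and set $I_{\mathrm{train}}=\{1,\dots,n_{\mathrm{train}}\}$, $I_{\mathrm{cal}}=\{n_{\mathrm{train}}+1,\dots,n_{\mathrm{train}}+n_{\mathrm{cal}}\}$, $I_{\mathrm{test}}=\{n_{\mathrm{train}}+n_{\mathrm{cal}}+1,\dots,n\}$. Let $s:(\mathcal{X}\times\mathcal{Y})^{n_{\mathrm{train}}+1}\to\mathbb{R}$ be any (measurable) function and define the trained conformity score $\widehat{s}_{\mathrm{train}}(x,y)=s((X_i,Y_i)_{i\in I_{\mathrm{train}}},(x,y))$. For $\phi\in[0,1)$, the empirical quantile is $\widehat{q}_{\phi,\mathrm{cal}}=\inf\{t\in\mathbb{R}:\frac{1}{n_{\mathrm{cal}}}\sum_{i\in I_{\mathrm{cal}}}\mathbf{1}\{\widehat{s}_{\mathrm{train}}(X_i,Y_i)\le t\}\ge\phi\}$, and the predictive set is $C_\phi(x)=\{y\in\mathcal{Y}:\widehat{s}_{\mathrm{train}}(x,y)\le\widehat{q}_{\phi,\mathrm{cal}}\}$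 for $x\in\mathcal{X}$. For a measurable $q:(\mathcal{X}\times\mathcal{Y})^{n_{\mathrm{train}}}\to\mathbb{R}$, write $q_{\mathrm{train}}=q((X_i,Y_i)_{i\in I_{\mathrm{train}}})$ and $P_{q,\mathrm{train}}=\mathbb{P}[\widehat{s}_{\mathrm{train}}(X_*,Y_* )\le q_{\mathrm{train}}\mid (X_i,Y_i)_{i\in I_{\mathrm{train}}}]$. *)

theory Defs
  imports "HOL-Probability.Probability"
begin

definition I_train :: "nat \<Rightarrow> nat set" where
  "I_train ntr = {1..ntr}"

definition I_cal :: "nat \<Rightarrow> nat \<Rightarrow> nat set" where
  "I_cal ntr ncal = {ntr + 1..ntr + ncal}"

definition I_test :: "nat \<Rightarrow> nat \<Rightarrow> nat \<Rightarrow> nat set" where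
  "I_test ntr ncal nte = {ntr + ncal + 1..ntr + ncal + nte}"

definition train_data ::
  "(nat \<Rightarrow> 'a \<Rightarrow> 'x) \<Rightarrow> (nat \<Rightarrow> 'a \<Rightarrow> 'y) \<Rightarrow> nat \<Rightarrow> 'a \<Rightarrow> (nat \<Rightarrow> 'x \<times> 'y)" where
  "train_data X Y ntr \<omega> = (\<lambda>i\<in>I_train ntr. (X i \<omega>, Y i \<omega>))"

definition s_train ::
  "((nat \<Rightarrow> 'x \<times> 'y) \<Rightarrow> ('x \<times> 'y) \<Rightarrow> real) \<Rightarrow> (nat \<Rightarrow> 'a \<Rightarrow> 'x) \<Rightarrow> (nat \<Rightarrow> 'a \<Rightarrow> 'y)
    \<Rightarrow> nat \<Rightarrow> 'a \<Rightarrow> 'x \<Rightarrow> 'y \<Rightarrow> real" where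
  "s_train s X Y ntr \<omega> x y = s (train_data X Y ntr \<omega>) (x, y)"

definition q_cal ::
  "real \<Rightarrow> ((nat \<Rightarrow> 'x \<times> 'y) \<Rightarrow> ('x \<times> 'y) \<Rightarrow> real) \<Rightarrow> (nat \<Rightarrow> 'a \<Rightarrow> 'x) \<Rightarrow> (nat \<Rightarrow> 'a \<Rightarrow> 'y)
    \<Rightarrow> nat \<Rightarrow> nat \<Rightarrow> 'a \<Rightarrow> real" where
  "q_cal \<phi> s X Y ntr ncal \<omega> =
     Inf {t::real. real (card {i \<in> I_cal ntr ncal. s_train s X Y ntr \<omega> (X i \<omega>) (Y i \<omega>) \<le> t})
                     / real ncal \<ge> \<phi>}"

definition C_set ::
  "real \<Rightarrow> ((nat \<Rightarrow> 'x \<times> 'y) \<Rightarrow> ('x \<times> 'y) \<Rightarrow> real) \<Rightarrow> (nat \<Rightarrow> 'a \<Rightarrow> 'x) \<Rightarrow> (nat \<Rightarrow> 'a \<Rightarrow> 'y)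
    \<Rightarrow> nat \<Rightarrow> nat \<Rightarrow> 'a \<Rightarrow> 'x \<Rightarrow> 'y set" where
  "C_set \<phi> s X Y ntr ncal \<omega> x = {y. s_train s X Y ntr \<omega> x y \<le> q_cal \<phi> s X Y ntr ncal \<omega>}"

definition cal_freq ::
  "((nat \<Rightarrow> 'x \<times> 'y) \<Rightarrow> ('x \<times> 'y) \<Rightarrow> real) \<Rightarrow> ((nat \<Rightarrow> 'x \<times> 'y) \<Rightarrow> real)
    \<Rightarrow> (nat \<Rightarrow> 'a \<Rightarrow> 'x) \<Rightarrow> (nat \<Rightarrow> 'a \<Rightarrow> 'y) \<Rightarrow> nat \<Rightarrow> nat \<Rightarrow> 'a \<Rightarrow> real" where
  "cal_freq s q X Y ntr ncal \<omega> =
     real (card {i \<in> I_cal ntr ncal.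
                  s_train s X Y ntr \<omega> (X i \<omega>) (Y i \<omega>) \<le> q (train_data X Y ntr \<omega>)}) / real ncal"

text \<open>Conditional probability P_{q,train} = P[s_train(X_*,Y_*) <= q_train | training data].
  Since (X_*,Y_*) is independent of the sample, a version of it is obtained by integrating
  against the law Z of (X_*,Y_*) with the training data frozen:
  P_{q,train}(omega) = Z{z. s(train(omega), z) <= q(train(omega))}.\<close>
definition P_cond ::
  "('x \<times> 'y) measure \<Rightarrow> ((nat \<Rightarrow> 'x \<times> 'y) \<Rightarrow> ('x \<times> 'y) \<Rightarrow> real) \<Rightarrow> ((nat \<Rightarrow> 'x \<times> 'y) \<Rightarrow> real)
    \<Rightarrow> (nat \<Rightarrow> 'x \<times> 'y) \<Rightarrow> real" where
  "P_cond Z s q D = measure Z {z \<in> space Z. s D z \<le> q D}"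

end

theory Submission
  imports Defs
begin

(* Write t_c(D) for the c-quantile of the conditional law of the test score given the training
   data D. Both t_c(D) and the empirical calibration quantile are generalized inverses of
   distribution functions, so "quantile <= x iff c <= cdf x". Feeding the training-measurable
   thresholds t_c(D) - 1/(k+1), c = 1 - alpha - eps_cal, into the concentration hypothesis shows
   that with probability at least 1 - delta_cal the empirical (1 - alpha)-quantile is at least
   t_c(D); the decoupling hypothesis at t_c gives P[S_i <= t_c(D)] >= c - eps_test, and a union
   bound combines the two. The upper bound is symmetric with c = 1 - alpha + eps_cal: for an
   atomless conditional law the cdf at t_c(D) equals c, so on the concentration event the
   empirical quantile is at most t_c(D). *)

definition quantile :: "real measure \<Rightarrow> real \<Rightarrow> real" where
  "quantile \<mu> c = Inf {t. c \<le> cdf \<mu> t}"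

context real_distribution
begin

lemma quantile_le_iff:
  assumes "0 < c" "c < 1"
  shows "quantile M c \<le> x \<longleftrightarrow> c \<le> cdf M x"
proof -
  let ?S = "{t. c \<le> cdf M t}"
  have "\<forall>\<^sub>F t in at_top. c < cdf M t"
    using cdf_lim_at_top_prob \<open>c < 1\<close> by (rule order_tendstoD)
  then have nonempty: "?S \<noteq> {}"
    by (metis (mono_tags, lifting) eventually_at_top_linorder empty_iff less_eq_real_def mem_Collect_eq order_refl)
  have "\<forall>\<^sub>F t in at_bot. cdf M t < c"
    using cdf_lim_at_bot \<open>0 < c\<close> by (rule order_tendstoD)
  then obtain b where "\<And>t. t \<le> b \<Longrightarrow> cdf M t < c"
    by (auto simp: eventually_at_bot_linorder)
  then have bdd: "bdd_below ?S"
    by (metis bdd_below.I linorder_not_less mem_Collect_eq order_less_imp_le)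
  have "c \<le> cdf M (Inf ?S)"
  proof (rule tendsto_lowerbound)
    show "(cdf M \<longlongrightarrow> cdf M (Inf ?S)) (at_right (Inf ?S))"
      using cdf_is_right_cont by (simp add: continuous_within)
    show "\<forall>\<^sub>F y in at_right (Inf ?S). c \<le> cdf M y"
      using eventually_at_right_less
    proof (rule eventually_mono)
      fix y assume "Inf ?S < y"
      then obtain t where "c \<le> cdf M t" "t < y"
        using cInf_less_iff[OF nonempty bdd] by auto
      then show "c \<le> cdf M y"
        using cdf_nondecreasing[of t y] by linarith
    qed
  qed simp
  then show ?thesis
    using cdf_nondecreasing cInf_lower[OF _ bdd] unfolding quantile_def
    by (meson mem_Collect_eq order_trans)
qed

lemma cdf_quantile:
  assumes "0 < c" "c < 1" and "measure M {quantile M c} = 0"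
  shows "cdf M (quantile M c) = c"
proof (rule antisym)
  have "isCont (cdf M) (quantile M c)"
    using assms(3) isCont_cdf by blast
  then have "(cdf M \<longlongrightarrow> cdf M (quantile M c)) (at_left (quantile M c))"
    by (simp add: isCont_def filterlim_at_split)
  moreover have "\<forall>\<^sub>F y in at_left (quantile M c). cdf M y \<le> c"
  proof -
    have "cdf M y \<le> c" if "y < quantile M c" for y
      using that quantile_le_iff[OF assms(1,2), of y] by linarith
    then show ?thesis
      by (auto simp: eventually_at_left_field intro!: exI[of _ "quantile M c - 1"])
  qed
  ultimately show "cdf M (quantile M c) \<le> c"
    by (rule tendsto_upperbound) (simp add: trivial_limit_at_left_real)
qed (use quantile_le_iff[OF assms(1,2), of "quantile M c"] in simp)

end

lemma measurable_quantile:
  assumes "\<And>x. x \<in> space N \<Longrightarrow> real_distribution (\<mu> x)"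
    and "\<And>t. (\<lambda>x. cdf (\<mu> x) t) \<in> borel_measurable N"
    and "0 < c" "c < 1"
  shows "(\<lambda>x. quantile (\<mu> x) c) \<in> borel_measurable N"
  unfolding borel_measurable_iff_le
proof
  fix a
  have "{x \<in> space N. quantile (\<mu> x) c \<le> a} = {x \<in> space N. c \<le> cdf (\<mu> x) a}"
    using real_distribution.quantile_le_iff[OF assms(1) assms(3,4)] by blast
  also have "\<dots> \<in> sets N"
    using assms(2) by measurable
  finally show "{x \<in> space N. quantile (\<mu> x) c \<le> a} \<in> sets N" .
qed

lemma (in prob_space) cdf_distr:
  assumes "f \<in> borel_measurable M"
  shows "cdf (distr M borel f) t = prob {x \<in> space M. f x \<le> t}"
proof -
  have "f -` {..t} \<inter> space M = {x \<in> space M. f x \<le> t}" by auto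
  then show ?thesis
    using assms by (simp add: cdf_def measure_distr)
qed

lemma (in prob_space) prob_inter_ge:
  assumes "A \<in> events" "B \<in> events"
  shows "prob A + prob B - 1 \<le> prob (A \<inter> B)"
proof -
  have "prob A \<le> prob (A \<inter> B \<union> (space M - B))"
    using assms sets.sets_into_space by (intro finite_measure_mono) auto
  also have "\<dots> \<le> prob (A \<inter> B) + prob (space M - B)"
    using assms by (intro measure_Un_le) auto
  finally show ?thesis
    using prob_compl[OF assms(2)] by simp
qed

lemma (in prob_space) prob_le_ge_of_approx:
  assumes f: "f \<in> borel_measurable M" and g: "g \<in> borel_measurable M"
    and approx: "\<And>k. p \<le> prob {x \<in> space M. f x - 1 / Suc k < g x}"
  shows "p \<le> prob {x \<in> space M. f x \<le> g x}"
proof -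
  define A where "A k = {x \<in> space M. f x - 1 / Suc k < g x}" for k
  have A_sets: "range A \<subseteq> events"
    unfolding A_def using f g by auto
  have "decseq A"
  proof (rule decseq_SucI)
    fix k
    have "1 / Suc (Suc k) \<le> 1 / Suc k"
      by (simp add: frac_le)
    then show "A (Suc k) \<subseteq> A k"
      unfolding A_def by force
  qed
  then have "(\<lambda>k. prob (A k)) \<longlonglongrightarrow> prob (\<Inter>k. A k)"
    by (rule finite_Lim_measure_decseq[OF A_sets])
  moreover have "\<forall>\<^sub>F k in sequentially. p \<le> prob (A k)"
    using approx unfolding A_def by (intro always_eventually) blast
  ultimately have "p \<le> prob (\<Inter>k. A k)"
    by (rule tendsto_lowerbound) simp
  also have "(\<Inter>k. A k) = {x \<in> space M. f x \<le> g x}"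
  proof
    show "(\<Inter>k. A k) \<subseteq> {x \<in> space M. f x \<le> g x}"
    proof
      fix x assume x: "x \<in> (\<Inter>k. A k)"
      have "f x \<le> g x"
      proof (rule ccontr)
        assume "\<not> f x \<le> g x"
        then obtain k where "1 / Suc k < f x - g x"
          using reals_Archimedean by (metis diff_gt_0_iff_gt inverse_eq_divide not_le)
        moreover have "f x - 1 / Suc k < g x"
          using x unfolding A_def by blast
        ultimately show False
          by linarith
      qed
      then show "x \<in> {x \<in> space M. f x \<le> g x}"
        using x by (auto simp: A_def)
    qed
    have "0 < 1 / real (Suc k)" for k
      by simp
    then show "{x \<in> space M. f x \<le> g x} \<subseteq> (\<Inter>k. A k)"
      unfolding A_def by (smt (verit) Collect_mono INT_greatest)
  qed
  finally show ?thesis .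
qed

(* An abstract split-conformal model: D is the training data, law d the conditional law of the
   conformity score of a fresh point given D = d, and emp the empirical law of the calibration
   scores. *)
locale calibrated_quantile = prob_space M for M :: "'a measure" +
  fixes T :: "'t measure" and D :: "'a \<Rightarrow> 't"
    and law :: "'t \<Rightarrow> real measure" and emp :: "'a \<Rightarrow> real measure"
  assumes measurable_D: "D \<in> M \<rightarrow>\<^sub>M T"
    and real_distribution_law: "\<And>d. d \<in> space T \<Longrightarrow> real_distribution (law d)"
    and measurable_cdf_law: "(\<lambda>(d, t). cdf (law d) t) \<in> borel_measurable (T \<Otimes>\<^sub>M borel)"
    and real_distribution_emp: "\<And>\<omega>. \<omega> \<in> space M \<Longrightarrow> real_distribution (emp \<omega>)"
    and measurable_cdf_emp: "\<And>t. (\<lambda>\<omega>. cdf (emp \<omega>) t) \<in> borel_measurable M"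
begin

definition calibration_concentrates :: "real \<Rightarrow> real \<Rightarrow> bool" where
  "calibration_concentrates \<epsilon> \<delta> \<longleftrightarrow> (\<forall>q \<in> T \<rightarrow>\<^sub>M borel.
     1 - \<delta> \<le> prob {\<omega> \<in> space M. \<bar>cdf (emp \<omega>) (q (D \<omega>)) - cdf (law (D \<omega>)) (q (D \<omega>))\<bar> \<le> \<epsilon>})"

definition test_decoupled :: "('a \<Rightarrow> real) \<Rightarrow> real \<Rightarrow> bool" where
  "test_decoupled S \<epsilon> \<longleftrightarrow> (\<forall>q \<in> T \<rightarrow>\<^sub>M borel.
     \<bar>prob {\<omega> \<in> space M. S \<omega> \<le> q (D \<omega>)} - (\<integral>\<omega>. cdf (law (D \<omega>)) (q (D \<omega>)) \<partial>M)\<bar> \<le> \<epsilon>)"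

lemma calibration_concentratesD:
  assumes "calibration_concentrates \<epsilon> \<delta>" and "q \<in> borel_measurable T"
  shows "1 - \<delta> \<le> prob {\<omega> \<in> space M. \<bar>cdf (emp \<omega>) (q (D \<omega>)) - cdf (law (D \<omega>)) (q (D \<omega>))\<bar> \<le> \<epsilon>}"
  using assms unfolding calibration_concentrates_def by blast

lemma test_decoupledD:
  assumes "test_decoupled S \<epsilon>" and "q \<in> borel_measurable T"
  shows "\<bar>prob {\<omega> \<in> space M. S \<omega> \<le> q (D \<omega>)} - (\<integral>\<omega>. cdf (law (D \<omega>)) (q (D \<omega>)) \<partial>M)\<bar> \<le> \<epsilon>"
  using assms unfolding test_decoupled_def by blast

lemma D_in_space: "\<omega> \<in> space M \<Longrightarrow> D \<omega> \<in> space T"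
  using measurable_D by (rule measurable_space)

lemma measurable_cdf_law_comp:
  assumes "q \<in> borel_measurable T"
  shows "(\<lambda>\<omega>. cdf (law (D \<omega>)) (q (D \<omega>))) \<in> borel_measurable M"
proof -
  have "(\<lambda>\<omega>. (D \<omega>, q (D \<omega>))) \<in> M \<rightarrow>\<^sub>M T \<Otimes>\<^sub>M borel"
    using measurable_D assms by measurable
  from measurable_compose[OF this measurable_cdf_law] show ?thesis
    by simp
qed

lemma measurable_quantile_law:
  assumes "0 < c" "c < 1"
  shows "(\<lambda>d. quantile (law d) c) \<in> borel_measurable T"
proof (rule measurable_quantile[OF real_distribution_law _ assms])
  fix t :: real
  have "(\<lambda>d. (d, t)) \<in> T \<rightarrow>\<^sub>M T \<Otimes>\<^sub>M borel"
    by measurable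
  from measurable_compose[OF this measurable_cdf_law]
  show "(\<lambda>d. cdf (law d) t) \<in> borel_measurable T"
    by simp
qed

lemma measurable_quantile_emp:
  assumes "0 < c" "c < 1"
  shows "(\<lambda>\<omega>. quantile (emp \<omega>) c) \<in> borel_measurable M"
  by (rule measurable_quantile[OF real_distribution_emp measurable_cdf_emp assms])

lemma integrable_cdf_law:
  assumes "q \<in> borel_measurable T"
  shows "integrable M (\<lambda>\<omega>. cdf (law (D \<omega>)) (q (D \<omega>)))"
proof (rule integrable_const_bound[where B = 1])
  show "AE \<omega> in M. norm (cdf (law (D \<omega>)) (q (D \<omega>))) \<le> 1"
    using real_distribution.cdf_bounded_prob[OF real_distribution_law[OF D_in_space]]
    by (intro AE_I2) (simp add: cdf_def)
qed (rule measurable_cdf_law_comp[OF assms])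

lemma calibration_concentrates_nonneg:
  assumes "calibration_concentrates \<epsilon> \<delta>"
  shows "0 \<le> \<delta>"
proof -
  have "1 - \<delta> \<le> prob {\<omega> \<in> space M. \<bar>cdf (emp \<omega>) 0 - cdf (law (D \<omega>)) 0\<bar> \<le> \<epsilon>}"
    using calibration_concentratesD[OF assms, of "\<lambda>_. 0"] by simp
  then show ?thesis
    using prob_le_1 by (smt (verit))
qed

lemma test_decoupled_nonneg:
  assumes "test_decoupled S \<epsilon>"
  shows "0 \<le> \<epsilon>"
  using test_decoupledD[OF assms, of "\<lambda>_. 0"] by simp

lemma prob_quantile_law_le_quantile_emp:
  assumes conc: "calibration_concentrates \<epsilon> \<delta>"
    and "0 < \<alpha>" "0 \<le> \<epsilon>" "0 < 1 - \<alpha> - \<epsilon>"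
  shows "1 - \<delta> \<le> prob {\<omega> \<in> space M. quantile (law (D \<omega>)) (1 - \<alpha> - \<epsilon>) \<le> quantile (emp \<omega>) (1 - \<alpha>)}"
proof (rule prob_le_ge_of_approx)
  define c where "c = 1 - \<alpha> - \<epsilon>"
  have c: "0 < c" "c < 1" and \<alpha>: "0 < 1 - \<alpha>" "1 - \<alpha> < 1"
    using assms by (auto simp: c_def)
  show "(\<lambda>\<omega>. quantile (law (D \<omega>)) c) \<in> borel_measurable M"
    using measurable_compose[OF measurable_D measurable_quantile_law[OF c]] .
  show "(\<lambda>\<omega>. quantile (emp \<omega>) (1 - \<alpha>)) \<in> borel_measurable M"
    by (rule measurable_quantile_emp[OF \<alpha>])
  fix k
  define q where "q d = quantile (law d) c - 1 / Suc k" for d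
  have "q \<in> borel_measurable T"
    unfolding q_def using measurable_quantile_law[OF c] by measurable
  then have "1 - \<delta> \<le> prob {\<omega> \<in> space M. \<bar>cdf (emp \<omega>) (q (D \<omega>)) - cdf (law (D \<omega>)) (q (D \<omega>))\<bar> \<le> \<epsilon>}"
    by (rule calibration_concentratesD[OF conc])
  also have "\<dots> \<le> prob {\<omega> \<in> space M. quantile (law (D \<omega>)) c - 1 / Suc k < quantile (emp \<omega>) (1 - \<alpha>)}"
  proof (rule finite_measure_mono)
    show "{\<omega> \<in> space M. \<bar>cdf (emp \<omega>) (q (D \<omega>)) - cdf (law (D \<omega>)) (q (D \<omega>))\<bar> \<le> \<epsilon>}
      \<subseteq> {\<omega> \<in> space M. quantile (law (D \<omega>)) c - 1 / Suc k < quantile (emp \<omega>) (1 - \<alpha>)}"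
    proof safe
      fix \<omega> assume \<omega>: "\<omega> \<in> space M" and close: "\<bar>cdf (emp \<omega>) (q (D \<omega>)) - cdf (law (D \<omega>)) (q (D \<omega>))\<bar> \<le> \<epsilon>"
      have "\<not> quantile (law (D \<omega>)) c \<le> q (D \<omega>)"
        by (simp add: q_def)
      then have "cdf (law (D \<omega>)) (q (D \<omega>)) < c"
        using real_distribution.quantile_le_iff[OF real_distribution_law[OF D_in_space[OF \<omega>]] c] by simp
      then have "cdf (emp \<omega>) (q (D \<omega>)) < 1 - \<alpha>"
        using close by (simp add: c_def)
      then show "quantile (law (D \<omega>)) c - 1 / Suc k < quantile (emp \<omega>) (1 - \<alpha>)"
        using real_distribution.quantile_le_iff[OF real_distribution_emp[OF \<omega>] \<alpha>, of "q (D \<omega>)"]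
        by (simp add: q_def)
    qed
    show "{\<omega> \<in> space M. quantile (law (D \<omega>)) c - 1 / Suc k < quantile (emp \<omega>) (1 - \<alpha>)} \<in> events"
      using measurable_compose[OF measurable_D measurable_quantile_law[OF c]]
        measurable_quantile_emp[OF \<alpha>] by measurable
  qed
  finally show "1 - \<delta> \<le> prob {\<omega> \<in> space M. quantile (law (D \<omega>)) c - 1 / Suc k < quantile (emp \<omega>) (1 - \<alpha>)}" .
qed


lemma prob_quantile_emp_le_quantile_law:
  assumes conc: "calibration_concentrates \<epsilon> \<delta>"
    and atomless: "AE \<omega> in M. \<forall>t. measure (law (D \<omega>)) {t} = 0"
    and "0 < \<alpha>" "\<alpha> < 1" "0 \<le> \<epsilon>" "1 - \<alpha> + \<epsilon> < 1"
  shows "1 - \<delta> \<le> prob {\<omega> \<in> space M. quantile (emp \<omega>) (1 - \<alpha>) \<le> quantile (law (D \<omega>)) (1 - \<alpha> + \<epsilon>)}"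
proof -
  define c where "c = 1 - \<alpha> + \<epsilon>"
  have c: "0 < c" "c < 1" and \<alpha>: "0 < 1 - \<alpha>" "1 - \<alpha> < 1"
    using assms by (auto simp: c_def)
  define q where "q d = quantile (law d) c" for d
  have q: "q \<in> borel_measurable T"
    unfolding q_def by (rule measurable_quantile_law[OF c])
  then have "1 - \<delta> \<le> prob {\<omega> \<in> space M. \<bar>cdf (emp \<omega>) (q (D \<omega>)) - cdf (law (D \<omega>)) (q (D \<omega>))\<bar> \<le> \<epsilon>}"
    by (rule calibration_concentratesD[OF conc])
  also have "\<dots> \<le> prob {\<omega> \<in> space M. quantile (emp \<omega>) (1 - \<alpha>) \<le> q (D \<omega>)}"
  proof (rule finite_measure_mono_AE)
    show "AE \<omega> in M. \<omega> \<in> {\<omega> \<in> space M. \<bar>cdf (emp \<omega>) (q (D \<omega>)) - cdf (law (D \<omega>)) (q (D \<omega>))\<bar> \<le> \<epsilon>}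
      \<longrightarrow> \<omega> \<in> {\<omega> \<in> space M. quantile (emp \<omega>) (1 - \<alpha>) \<le> q (D \<omega>)}"
      using atomless
    proof (rule AE_mp, intro AE_I2 impI)
      fix \<omega> assume \<omega>: "\<omega> \<in> space M" and "\<forall>t. measure (law (D \<omega>)) {t} = 0"
        and "\<omega> \<in> {\<omega> \<in> space M. \<bar>cdf (emp \<omega>) (q (D \<omega>)) - cdf (law (D \<omega>)) (q (D \<omega>))\<bar> \<le> \<epsilon>}"
      moreover have "cdf (law (D \<omega>)) (q (D \<omega>)) = c" if "measure (law (D \<omega>)) {q (D \<omega>)} = 0"
        using real_distribution.cdf_quantile[OF real_distribution_law[OF D_in_space[OF \<omega>]] c] that
        by (simp add: q_def)
      ultimately have "1 - \<alpha> \<le> cdf (emp \<omega>) (q (D \<omega>))"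
        by (simp add: c_def)
      then show "\<omega> \<in> {\<omega> \<in> space M. quantile (emp \<omega>) (1 - \<alpha>) \<le> q (D \<omega>)}"
        using real_distribution.quantile_le_iff[OF real_distribution_emp[OF \<omega>] \<alpha>] \<omega> by simp
    qed
    show "{\<omega> \<in> space M. quantile (emp \<omega>) (1 - \<alpha>) \<le> q (D \<omega>)} \<in> events"
      using measurable_compose[OF measurable_D q] measurable_quantile_emp[OF \<alpha>] by (rule borel_measurable_le[rotated])
  qed
  finally show ?thesis
    by (simp add: q_def c_def)
qed

lemma prob_le_quantile_law_ge:
  assumes "test_decoupled S \<epsilon>" and c: "0 < c" "c < 1"
  shows "c - \<epsilon> \<le> prob {\<omega> \<in> space M. S \<omega> \<le> quantile (law (D \<omega>)) c}"
proof -
  have q: "(\<lambda>d. quantile (law d) c) \<in> borel_measurable T"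
    by (rule measurable_quantile_law[OF c])
  have "c \<le> (\<integral>\<omega>. cdf (law (D \<omega>)) (quantile (law (D \<omega>)) c) \<partial>M)"
  proof (rule integral_ge_const[OF integrable_cdf_law[OF q]], intro AE_I2)
    fix \<omega> assume \<omega>: "\<omega> \<in> space M"
    show "c \<le> cdf (law (D \<omega>)) (quantile (law (D \<omega>)) c)"
      using real_distribution.quantile_le_iff[OF real_distribution_law[OF D_in_space[OF \<omega>]] c,
          THEN iffD1, OF order_refl] .
  qed
  moreover have "\<bar>prob {\<omega> \<in> space M. S \<omega> \<le> quantile (law (D \<omega>)) c}
      - (\<integral>\<omega>. cdf (law (D \<omega>)) (quantile (law (D \<omega>)) c) \<partial>M)\<bar> \<le> \<epsilon>"
    by (rule test_decoupledD[OF assms(1) q])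
  ultimately show ?thesis
    by linarith
qed

lemma prob_le_quantile_law_le:
  assumes "test_decoupled S \<epsilon>" and atomless: "AE \<omega> in M. \<forall>t. measure (law (D \<omega>)) {t} = 0"
    and c: "0 < c" "c < 1"
  shows "prob {\<omega> \<in> space M. S \<omega> \<le> quantile (law (D \<omega>)) c} \<le> c + \<epsilon>"
proof -
  have q: "(\<lambda>d. quantile (law d) c) \<in> borel_measurable T"
    by (rule measurable_quantile_law[OF c])
  have "(\<integral>\<omega>. cdf (law (D \<omega>)) (quantile (law (D \<omega>)) c) \<partial>M) \<le> c"
    using atomless
  proof (rule integral_le_const[OF integrable_cdf_law[OF q] AE_mp], intro AE_I2 impI)
    fix \<omega> assume \<omega>: "\<omega> \<in> space M" and "\<forall>t. measure (law (D \<omega>)) {t} = 0"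
    then show "cdf (law (D \<omega>)) (quantile (law (D \<omega>)) c) \<le> c"
      using real_distribution.cdf_quantile[OF real_distribution_law[OF D_in_space[OF \<omega>]] c] by simp
  qed
  moreover have "\<bar>prob {\<omega> \<in> space M. S \<omega> \<le> quantile (law (D \<omega>)) c}
      - (\<integral>\<omega>. cdf (law (D \<omega>)) (quantile (law (D \<omega>)) c) \<partial>M)\<bar> \<le> \<epsilon>"
    by (rule test_decoupledD[OF assms(1) q])
  ultimately show ?thesis
    by linarith
qed

lemma coverage_lower_bound:
  assumes conc: "calibration_concentrates \<epsilon>cal \<delta>cal" and dec: "test_decoupled S \<epsilon>test"
    and S: "S \<in> borel_measurable M" and "0 < \<alpha>" "\<alpha> < 1" "0 \<le> \<epsilon>cal"
  shows "1 - \<alpha> - \<epsilon>cal - \<delta>cal - \<epsilon>test \<le> prob {\<omega> \<in> space M. S \<omega> \<le> quantile (emp \<omega>) (1 - \<alpha>)}"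
proof (cases "1 - \<alpha> - \<epsilon>cal \<le> 0")
  case True
  then show ?thesis
    using calibration_concentrates_nonneg[OF conc] test_decoupled_nonneg[OF dec] measure_nonneg
    by (smt (verit))
next
  case False
  define c where "c = 1 - \<alpha> - \<epsilon>cal"
  have c: "0 < c" "c < 1" and \<alpha>: "0 < 1 - \<alpha>" "1 - \<alpha> < 1"
    using False assms by (auto simp: c_def)
  let ?t = "\<lambda>\<omega>. quantile (law (D \<omega>)) c" and ?q = "\<lambda>\<omega>. quantile (emp \<omega>) (1 - \<alpha>)"
  have t: "?t \<in> borel_measurable M"
    using measurable_compose[OF measurable_D measurable_quantile_law[OF c]] .
  have q: "?q \<in> borel_measurable M"
    by (rule measurable_quantile_emp[OF \<alpha>])
  have "(c - \<epsilon>test) + (1 - \<delta>cal) - 1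
      \<le> prob {\<omega> \<in> space M. S \<omega> \<le> ?t \<omega>} + prob {\<omega> \<in> space M. ?t \<omega> \<le> ?q \<omega>} - 1"
    using prob_le_quantile_law_ge[OF dec c] prob_quantile_law_le_quantile_emp[OF conc assms(4,6) c(1)[unfolded c_def]]
    by (simp add: c_def)
  also have "\<dots> \<le> prob ({\<omega> \<in> space M. S \<omega> \<le> ?t \<omega>} \<inter> {\<omega> \<in> space M. ?t \<omega> \<le> ?q \<omega>})"
    by (rule prob_inter_ge; rule borel_measurable_le) (fact S t q)+
  also have "\<dots> \<le> prob {\<omega> \<in> space M. S \<omega> \<le> ?q \<omega>}"
    using borel_measurable_le[OF S q] by (intro finite_measure_mono) auto
  finally show ?thesis
    by (simp add: c_def)
qed

lemma coverage_upper_bound: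
  assumes conc: "calibration_concentrates \<epsilon>cal \<delta>cal" and dec: "test_decoupled S \<epsilon>test"
    and atomless: "AE \<omega> in M. \<forall>t. measure (law (D \<omega>)) {t} = 0"
    and S: "S \<in> borel_measurable M" and "0 < \<alpha>" "\<alpha> < 1" "0 \<le> \<epsilon>cal"
  shows "prob {\<omega> \<in> space M. S \<omega> \<le> quantile (emp \<omega>) (1 - \<alpha>)} \<le> 1 - \<alpha> + \<epsilon>cal + \<delta>cal + \<epsilon>test"
proof (cases "1 \<le> 1 - \<alpha> + \<epsilon>cal")
  case True
  then show ?thesis
    using calibration_concentrates_nonneg[OF conc] test_decoupled_nonneg[OF dec] prob_le_1
    by (smt (verit))
next
  case False
  define c where "c = 1 - \<alpha> + \<epsilon>cal"
  have c: "0 < c" "c < 1" and \<alpha>: "0 < 1 - \<alpha>" "1 - \<alpha> < 1"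
    using False assms by (auto simp: c_def)
  let ?t = "\<lambda>\<omega>. quantile (law (D \<omega>)) c" and ?q = "\<lambda>\<omega>. quantile (emp \<omega>) (1 - \<alpha>)"
  have t: "?t \<in> borel_measurable M"
    using measurable_compose[OF measurable_D measurable_quantile_law[OF c]] .
  have q: "?q \<in> borel_measurable M"
    by (rule measurable_quantile_emp[OF \<alpha>])
  have "prob {\<omega> \<in> space M. S \<omega> \<le> ?q \<omega>} + (1 - \<delta>cal) - 1
      \<le> prob {\<omega> \<in> space M. S \<omega> \<le> ?q \<omega>} + prob {\<omega> \<in> space M. ?q \<omega> \<le> ?t \<omega>} - 1"
    using prob_quantile_emp_le_quantile_law[OF conc atomless assms(5-7)] False
    by (simp add: c_def)
  also have "\<dots> \<le> prob ({\<omega> \<in> space M. S \<omega> \<le> ?q \<omega>} \<inter> {\<omega> \<in> space M. ?q \<omega> \<le> ?t \<omega>})"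
    by (rule prob_inter_ge; rule borel_measurable_le) (fact S t q)+
  also have "\<dots> \<le> prob {\<omega> \<in> space M. S \<omega> \<le> ?t \<omega>}"
    using borel_measurable_le[OF S t] by (intro finite_measure_mono) auto
  also have "\<dots> \<le> c + \<epsilon>test"
    by (rule prob_le_quantile_law_le[OF dec atomless c])
  finally show ?thesis
    by (simp add: c_def)
qed

end

definition empirical_distribution :: "'i set \<Rightarrow> ('i \<Rightarrow> real) \<Rightarrow> real measure" where
  "empirical_distribution I f = distr (measure_pmf (pmf_of_set I)) borel f"

lemma real_distribution_empirical_distribution: "real_distribution (empirical_distribution I f)"
  unfolding empirical_distribution_def by (intro prob_space.real_distribution_distr prob_space_measure_pmf) simp

lemma cdf_empirical_distribution:
  assumes "finite I" "I \<noteq> {}"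
  shows "cdf (empirical_distribution I f) t = card {i \<in> I. f i \<le> t} / card I"
proof -
  have "I \<inter> {i. f i \<le> t} = {i \<in> I. f i \<le> t}"
    by blast
  then show ?thesis
    unfolding empirical_distribution_def using assms
    by (simp add: prob_space.cdf_distr[OF prob_space_measure_pmf] measure_pmf_of_set)
qed

lemma measurable_cdf_empirical_distribution:
  assumes "finite I" "I \<noteq> {}" and f: "\<And>i. i \<in> I \<Longrightarrow> f i \<in> borel_measurable M"
  shows "(\<lambda>\<omega>. cdf (empirical_distribution I (\<lambda>i. f i \<omega>)) t) \<in> borel_measurable M"
proof -
  have "(\<lambda>\<omega>. (\<Sum>i\<in>I. of_bool (f i \<omega> \<le> t)) / card I) \<in> borel_measurable M"
    using f by measurable
  then show ?thesis
    using assms(1,2) by (simp add: cdf_empirical_distribution Int_def conj_commute)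
qed

lemma (in prob_space) measurable_cdf_distr_section:
  assumes f: "(\<lambda>(d, z). f d z) \<in> N \<Otimes>\<^sub>M M \<rightarrow>\<^sub>M borel"
  shows "(\<lambda>(d, t). cdf (distr M borel (f d)) t) \<in> borel_measurable (N \<Otimes>\<^sub>M borel)"
proof -
  let ?Q = "{x \<in> space ((N \<Otimes>\<^sub>M borel) \<Otimes>\<^sub>M M). f (fst (fst x)) (snd x) \<le> snd (fst x)}"
  have "(\<lambda>x. (fst (fst x), snd x)) \<in> (N \<Otimes>\<^sub>M borel) \<Otimes>\<^sub>M M \<rightarrow>\<^sub>M N \<Otimes>\<^sub>M M"
    by measurable
  from measurable_compose[OF this f]
  have "(\<lambda>x. f (fst (fst x)) (snd x)) \<in> borel_measurable ((N \<Otimes>\<^sub>M borel) \<Otimes>\<^sub>M M)"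
    by simp
  then have "?Q \<in> sets ((N \<Otimes>\<^sub>M borel) \<Otimes>\<^sub>M M)"
    by measurable
  then have "(\<lambda>x. enn2real (emeasure M (Pair x -` ?Q))) \<in> borel_measurable (N \<Otimes>\<^sub>M borel)"
    by (intro borel_measurable_enn2real measurable_emeasure_Pair)
  then show ?thesis
  proof (rule measurable_cong[THEN iffD1, rotated])
    fix x :: "_ \<times> real" assume "x \<in> space (N \<Otimes>\<^sub>M borel)"
    then obtain d t where x: "x = (d, t)" and d: "d \<in> space N"
      by (auto simp: space_pair_measure)
    have "f d \<in> borel_measurable M"
      using measurable_Pair2[OF f d] by simp
    moreover have "Pair x -` ?Q = {z \<in> space M. f d z \<le> t}"
      using d by (auto simp: x space_pair_measure)
    ultimately show "enn2real (emeasure M (Pair x -` ?Q)) = (\<lambda>(d, t). cdf (distr M borel (f d)) t) x"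
      by (simp add: x cdf_distr measure_def)
  qed
qed

locale split_conformal = prob_space M for M :: "'a measure" +
  fixes MX :: "'x measure" and MY :: "'y measure"
    and X :: "nat \<Rightarrow> 'a \<Rightarrow> 'x" and Y :: "nat \<Rightarrow> 'a \<Rightarrow> 'y"
    and Xs :: "'a \<Rightarrow> 'x" and Ys :: "'a \<Rightarrow> 'y"
    and ntr ncal nte :: nat
    and s :: "(nat \<Rightarrow> 'x \<times> 'y) \<Rightarrow> ('x \<times> 'y) \<Rightarrow> real"
  assumes ncal_pos: "0 < ncal"
    and X_meas: "\<And>i. i \<in> {1..ntr + ncal + nte} \<Longrightarrow> X i \<in> M \<rightarrow>\<^sub>M MX"
    and Y_meas: "\<And>i. i \<in> {1..ntr + ncal + nte} \<Longrightarrow> Y i \<in> M \<rightarrow>\<^sub>M MY"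
    and Xs_meas: "Xs \<in> M \<rightarrow>\<^sub>M MX" and Ys_meas: "Ys \<in> M \<rightarrow>\<^sub>M MY"
    and s_meas: "(\<lambda>(D, z). s D z) \<in>
                   (PiM (I_train ntr) (\<lambda>_. MX \<Otimes>\<^sub>M MY)) \<Otimes>\<^sub>M (MX \<Otimes>\<^sub>M MY) \<rightarrow>\<^sub>M borel"
begin

abbreviation test_law :: "('x \<times> 'y) measure" where
  "test_law \<equiv> distr M (MX \<Otimes>\<^sub>M MY) (\<lambda>\<omega>. (Xs \<omega>, Ys \<omega>))"

abbreviation train_space :: "(nat \<Rightarrow> 'x \<times> 'y) measure" where
  "train_space \<equiv> PiM (I_train ntr) (\<lambda>_. MX \<Otimes>\<^sub>M MY)"

abbreviation score :: "nat \<Rightarrow> 'a \<Rightarrow> real" where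
  "score i \<omega> \<equiv> s_train s X Y ntr \<omega> (X i \<omega>) (Y i \<omega>)"

definition score_law :: "(nat \<Rightarrow> 'x \<times> 'y) \<Rightarrow> real measure" where
  "score_law d = distr test_law borel (s d)"

definition cal_law :: "'a \<Rightarrow> real measure" where
  "cal_law \<omega> = empirical_distribution (I_cal ntr ncal) (\<lambda>i. score i \<omega>)"

lemma prob_space_test_law: "prob_space test_law"
  using Xs_meas Ys_meas by (intro prob_space_distr measurable_Pair)

lemma measurable_s_test_law: "(\<lambda>(d, z). s d z) \<in> train_space \<Otimes>\<^sub>M test_law \<rightarrow>\<^sub>M borel"
proof -
  have "sets (train_space \<Otimes>\<^sub>M test_law) = sets (train_space \<Otimes>\<^sub>M (MX \<Otimes>\<^sub>M MY))"
    by (rule sets_pair_measure_cong) simp_all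
  from measurable_cong_sets[OF this refl] s_meas show ?thesis
    by simp
qed

lemma measurable_train_data: "train_data X Y ntr \<in> M \<rightarrow>\<^sub>M train_space"
  unfolding train_data_def
proof (rule measurable_restrict)
  fix i assume "i \<in> I_train ntr"
  then have "i \<in> {1..ntr + ncal + nte}"
    by (auto simp: I_train_def)
  then show "(\<lambda>\<omega>. (X i \<omega>, Y i \<omega>)) \<in> M \<rightarrow>\<^sub>M MX \<Otimes>\<^sub>M MY"
    using X_meas Y_meas by (intro measurable_Pair) auto
qed

lemma measurable_score:
  assumes "i \<in> {1..ntr + ncal + nte}"
  shows "score i \<in> borel_measurable M"
proof -
  have "(\<lambda>\<omega>. (train_data X Y ntr \<omega>, (X i \<omega>, Y i \<omega>))) \<in> M \<rightarrow>\<^sub>M train_space \<Otimes>\<^sub>M (MX \<Otimes>\<^sub>M MY)"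
    using measurable_train_data X_meas[OF assms] Y_meas[OF assms] by (intro measurable_Pair)
  from measurable_compose[OF this s_meas] show ?thesis
    by (simp add: s_train_def)
qed

lemma finite_I_cal: "finite (I_cal ntr ncal)"
  by (simp add: I_cal_def)

lemma I_cal_nonempty: "I_cal ntr ncal \<noteq> {}"
  using ncal_pos by (simp add: I_cal_def)

lemma card_I_cal: "card (I_cal ntr ncal) = ncal"
  by (simp add: I_cal_def)

sublocale calibrated_quantile M train_space "train_data X Y ntr" score_law cal_law
proof (intro calibrated_quantile.intro calibrated_quantile_axioms.intro)
  show "prob_space M"
    by (rule prob_space_axioms)
  show "train_data X Y ntr \<in> M \<rightarrow>\<^sub>M train_space"
    by (rule measurable_train_data)
  show "real_distribution (score_law d)" if "d \<in> space train_space" for d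
    using measurable_Pair2[OF measurable_s_test_law that]
    unfolding score_law_def by (intro prob_space.real_distribution_distr prob_space_test_law) simp
  show "(\<lambda>(d, t). cdf (score_law d) t) \<in> borel_measurable (train_space \<Otimes>\<^sub>M borel)"
    unfolding score_law_def
    by (rule prob_space.measurable_cdf_distr_section[OF prob_space_test_law measurable_s_test_law])
  show "real_distribution (cal_law \<omega>)" for \<omega>
    unfolding cal_law_def by (rule real_distribution_empirical_distribution)
  show "(\<lambda>\<omega>. cdf (cal_law \<omega>) t) \<in> borel_measurable M" for t
    unfolding cal_law_def using finite_I_cal I_cal_nonempty
  proof (rule measurable_cdf_empirical_distribution)
    fix i assume "i \<in> I_cal ntr ncal"
    then show "score i \<in> borel_measurable M"
      by (intro measurable_score) (auto simp: I_cal_def)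
  qed
qed

lemma cal_freq_eq_cdf: "cal_freq s q X Y ntr ncal \<omega> = cdf (cal_law \<omega>) (q (train_data X Y ntr \<omega>))"
  by (simp add: cal_freq_def cal_law_def cdf_empirical_distribution finite_I_cal I_cal_nonempty card_I_cal)

lemma P_cond_eq_cdf:
  assumes "d \<in> space train_space"
  shows "P_cond test_law s q d = cdf (score_law d) (q d)"
  using measurable_Pair2[OF measurable_s_test_law assms]
  by (simp add: P_cond_def score_law_def prob_space.cdf_distr[OF prob_space_test_law])

lemma coverage_event_eq:
  "{\<omega> \<in> space M. Y i \<omega> \<in> C_set \<phi> s X Y ntr ncal \<omega> (X i \<omega>)}
     = {\<omega> \<in> space M. score i \<omega> \<le> quantile (cal_law \<omega>) \<phi>}"
  by (simp add: C_set_def q_cal_def quantile_def cal_law_def cdf_empirical_distribution finite_I_cal I_cal_nonempty card_I_cal)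

lemma calibration_concentratesI:
  assumes "\<And>q. q \<in> train_space \<rightarrow>\<^sub>M borel \<Longrightarrow>
         measure M {\<omega> \<in> space M.
            \<bar>cal_freq s q X Y ntr ncal \<omega> - P_cond test_law s q (train_data X Y ntr \<omega>)\<bar> \<le> \<epsilon>} \<ge> 1 - \<delta>"
  shows "calibration_concentrates \<epsilon> \<delta>"
  unfolding calibration_concentrates_def
proof
  fix q :: "(nat \<Rightarrow> 'x \<times> 'y) \<Rightarrow> real" assume q: "q \<in> borel_measurable train_space"
  have "{\<omega> \<in> space M. \<bar>cal_freq s q X Y ntr ncal \<omega> - P_cond test_law s q (train_data X Y ntr \<omega>)\<bar> \<le> \<epsilon>}
      = {\<omega> \<in> space M. \<bar>cdf (cal_law \<omega>) (q (train_data X Y ntr \<omega>))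
           - cdf (score_law (train_data X Y ntr \<omega>)) (q (train_data X Y ntr \<omega>))\<bar> \<le> \<epsilon>}"
    by (auto simp: cal_freq_eq_cdf P_cond_eq_cdf D_in_space)
  then show "1 - \<delta> \<le> prob {\<omega> \<in> space M. \<bar>cdf (cal_law \<omega>) (q (train_data X Y ntr \<omega>))
           - cdf (score_law (train_data X Y ntr \<omega>)) (q (train_data X Y ntr \<omega>))\<bar> \<le> \<epsilon>}"
    using assms[OF q] by simp
qed

lemma test_decoupledI:
  assumes "\<And>q. q \<in> train_space \<rightarrow>\<^sub>M borel \<Longrightarrow>
         \<bar>measure M {\<omega> \<in> space M. score i \<omega> \<le> q (train_data X Y ntr \<omega>)}
          - (\<integral>\<omega>. P_cond test_law s q (train_data X Y ntr \<omega>) \<partial>M)\<bar> \<le> \<epsilon>"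
  shows "test_decoupled (score i) \<epsilon>"
  unfolding test_decoupled_def
proof
  fix q :: "(nat \<Rightarrow> 'x \<times> 'y) \<Rightarrow> real" assume q: "q \<in> borel_measurable train_space"
  have "(\<integral>\<omega>. P_cond test_law s q (train_data X Y ntr \<omega>) \<partial>M)
      = (\<integral>\<omega>. cdf (score_law (train_data X Y ntr \<omega>)) (q (train_data X Y ntr \<omega>)) \<partial>M)"
    by (intro Bochner_Integration.integral_cong) (auto simp: P_cond_eq_cdf D_in_space)
  then show "\<bar>prob {\<omega> \<in> space M. score i \<omega> \<le> q (train_data X Y ntr \<omega>)}
      - (\<integral>\<omega>. cdf (score_law (train_data X Y ntr \<omega>)) (q (train_data X Y ntr \<omega>)) \<partial>M)\<bar> \<le> \<epsilon>"
    using assms[OF q] by simp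
qed

lemma atomless_score_law:
  assumes "AE \<omega> in M. \<forall>t::real. measure test_law {z \<in> space (MX \<Otimes>\<^sub>M MY). s (train_data X Y ntr \<omega>) z = t} = 0"
  shows "AE \<omega> in M. \<forall>t. measure (score_law (train_data X Y ntr \<omega>)) {t} = 0"
  using assms
proof (rule AE_mp, intro AE_I2 impI allI)
  fix \<omega> t assume \<omega>: "\<omega> \<in> space M"
    and "\<forall>t. measure test_law {z \<in> space (MX \<Otimes>\<^sub>M MY). s (train_data X Y ntr \<omega>) z = t} = 0"
  moreover have "s (train_data X Y ntr \<omega>) -` {t} \<inter> space test_law = {z \<in> space (MX \<Otimes>\<^sub>M MY). s (train_data X Y ntr \<omega>) z = t}"
    by auto
  ultimately show "measure (score_law (train_data X Y ntr \<omega>)) {t} = 0"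
    using measurable_Pair2[OF measurable_s_test_law D_in_space[OF \<omega>]]
    by (simp add: score_law_def measure_distr)
qed

end

theorem theorem2p1:
  fixes M :: "'a measure"
    and MX :: "'x measure" and MY :: "'y measure"
    and X :: "nat \<Rightarrow> 'a \<Rightarrow> 'x" and Y :: "nat \<Rightarrow> 'a \<Rightarrow> 'y"
    and Xs :: "'a \<Rightarrow> 'x" and Ys :: "'a \<Rightarrow> 'y"
    and ntr ncal nte :: nat
    and s :: "(nat \<Rightarrow> 'x \<times> 'y) \<Rightarrow> ('x \<times> 'y) \<Rightarrow> real"
    and \<alpha> \<epsilon>cal \<delta>cal \<epsilon>test :: real
  assumes M: "prob_space M"
    and pos: "0 < ntr" "0 < ncal" "0 < nte"
    and X_meas: "\<And>i. i \<in> {1..ntr + ncal + nte} \<Longrightarrow> X i \<in> M \<rightarrow>\<^sub>M MX"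
    and Y_meas: "\<And>i. i \<in> {1..ntr + ncal + nte} \<Longrightarrow> Y i \<in> M \<rightarrow>\<^sub>M MY"
    and Xs_meas: "Xs \<in> M \<rightarrow>\<^sub>M MX" and Ys_meas: "Ys \<in> M \<rightarrow>\<^sub>M MY"
    and indep: "\<And>A B. A \<in> sets (MX \<Otimes>\<^sub>M MY) \<Longrightarrow>
                  B \<in> sets (PiM {1..ntr + ncal + nte} (\<lambda>_. MX \<Otimes>\<^sub>M MY)) \<Longrightarrow>
                  measure M {\<omega> \<in> space M. (Xs \<omega>, Ys \<omega>) \<in> A
                     \<and> (\<lambda>i\<in>{1..ntr + ncal + nte}. (X i \<omega>, Y i \<omega>)) \<in> B}
                  = measure M {\<omega> \<in> space M. (Xs \<omega>, Ys \<omega>) \<in> A}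
                    * measure M {\<omega> \<in> space M. (\<lambda>i\<in>{1..ntr + ncal + nte}. (X i \<omega>, Y i \<omega>)) \<in> B}"
    and ident: "\<And>i. i \<in> {1..ntr + ncal + nte} \<Longrightarrow>
                  distr M (MX \<Otimes>\<^sub>M MY) (\<lambda>\<omega>. (X i \<omega>, Y i \<omega>))
                  = distr M (MX \<Otimes>\<^sub>M MY) (\<lambda>\<omega>. (Xs \<omega>, Ys \<omega>))"
    and s_meas: "(\<lambda>(D, z). s D z) \<in>
                   (PiM (I_train ntr) (\<lambda>_. MX \<Otimes>\<^sub>M MY)) \<Otimes>\<^sub>M (MX \<Otimes>\<^sub>M MY) \<rightarrow>\<^sub>M borel"
    and alpha: "0 < \<alpha>" "\<alpha> < 1"
    and eps_cal: "0 < \<epsilon>cal" "\<epsilon>cal < 1"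
    and delta_cal: "0 < \<delta>cal" "\<delta>cal < 1"
    and conc_cal: "\<And>q. q \<in> PiM (I_train ntr) (\<lambda>_. MX \<Otimes>\<^sub>M MY) \<rightarrow>\<^sub>M borel \<Longrightarrow>
         measure M {\<omega> \<in> space M.
            \<bar>cal_freq s q X Y ntr ncal \<omega>
             - P_cond (distr M (MX \<Otimes>\<^sub>M MY) (\<lambda>\<omega>. (Xs \<omega>, Ys \<omega>))) s q (train_data X Y ntr \<omega>)\<bar>
            \<le> \<epsilon>cal} \<ge> 1 - \<delta>cal"
    and decoupling: "\<And>q i. q \<in> PiM (I_train ntr) (\<lambda>_. MX \<Otimes>\<^sub>M MY) \<rightarrow>\<^sub>M borel \<Longrightarrow>
         i \<in> I_test ntr ncal nte \<Longrightarrow>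
         \<bar>measure M {\<omega> \<in> space M. s_train s X Y ntr \<omega> (X i \<omega>) (Y i \<omega>) \<le> q (train_data X Y ntr \<omega>)}
          - (\<integral>\<omega>. P_cond (distr M (MX \<Otimes>\<^sub>M MY) (\<lambda>\<omega>. (Xs \<omega>, Ys \<omega>))) s q (train_data X Y ntr \<omega>) \<partial>M)\<bar>
         \<le> \<epsilon>test"
  shows "(\<forall>i \<in> I_test ntr ncal nte.
            measure M {\<omega> \<in> space M. Y i \<omega> \<in> C_set (1 - \<alpha>) s X Y ntr ncal \<omega> (X i \<omega>)}
              \<ge> 1 - \<alpha> - \<epsilon>cal - \<delta>cal - \<epsilon>test)
       \<and> ((AE \<omega> in M. \<forall>t::real.
              measure (distr M (MX \<Otimes>\<^sub>M MY) (\<lambda>\<omega>. (Xs \<omega>, Ys \<omega>)))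
                {z \<in> space (MX \<Otimes>\<^sub>M MY). s (train_data X Y ntr \<omega>) z = t} = 0)
          \<longrightarrow> (\<forall>i \<in> I_test ntr ncal nte.
                \<bar>measure M {\<omega> \<in> space M. Y i \<omega> \<in> C_set (1 - \<alpha>) s X Y ntr ncal \<omega> (X i \<omega>)}
                  - (1 - \<alpha>)\<bar> \<le> \<epsilon>cal + \<delta>cal + \<epsilon>test))"
proof -
  \<comment> \<open>Independence and identical distribution enter only through (i) and (ii), which are assumed.\<close>
  interpret split_conformal M MX MY X Y Xs Ys ntr ncal nte s
    by (intro split_conformal.intro split_conformal_axioms.intro M pos(2) X_meas Y_meas Xs_meas Ys_meas s_meas)
  have conc: "calibration_concentrates \<epsilon>cal \<delta>cal"
    using conc_cal by (rule calibration_concentratesI)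
  have dec: "test_decoupled (score i) \<epsilon>test" if "i \<in> I_test ntr ncal nte" for i
    using decoupling[OF _ that] by (rule test_decoupledI)
  have score: "score i \<in> borel_measurable M" if "i \<in> I_test ntr ncal nte" for i
    using that by (intro measurable_score) (auto simp: I_test_def)
  have lower: "1 - \<alpha> - \<epsilon>cal - \<delta>cal - \<epsilon>test \<le> prob {\<omega> \<in> space M. score i \<omega> \<le> quantile (cal_law \<omega>) (1 - \<alpha>)}"
    if "i \<in> I_test ntr ncal nte" for i
    using coverage_lower_bound[OF conc dec[OF that] score[OF that] alpha] eps_cal by simp
  have upper: "prob {\<omega> \<in> space M. score i \<omega> \<le> quantile (cal_law \<omega>) (1 - \<alpha>)} \<le> 1 - \<alpha> + \<epsilon>cal + \<delta>cal + \<epsilon>test"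
    if "AE \<omega> in M. \<forall>t::real. measure test_law {z \<in> space (MX \<Otimes>\<^sub>M MY). s (train_data X Y ntr \<omega>) z = t} = 0"
      and "i \<in> I_test ntr ncal nte" for i
    using coverage_upper_bound[OF conc dec[OF that(2)] atomless_score_law[OF that(1)] score[OF that(2)] alpha]
      eps_cal by simp
  show ?thesis
    unfolding coverage_event_eq using lower upper by (simp add: abs_le_iff) (smt (verit))
qed

end
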